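(* Let $n,k,d,d_p$ be positive integers with $d_p\ge n$, and let $\mathbf{P}\in\mathbb{R}^{n\times d_p}$ have orthonormal rows $\mathbf{P}_1,\dots,\mathbf{P}_n$. Let $\mu$ be any order-$2k$ equivalence class, i.e. $\mu\in[n]^{2k}/_\sim$, with basis tensor $\mathbf{B}^\mu\in\mathbb{R}^{n^{2k}}$, regarded as an $n^k\times n^k$ matrix $\mathbf{B}^\mu_{\mathbf{i},\mathbf{j}}$ indexed by $\mathbf{i},\mathbf{j}\in[n]^k$. Then for every $\delta>0$ there exist a type identifier dimension $d_e$, type identifiers $\mathbf{E}^{\gamma}\in\mathbb{R}^{d_e}$ (one for each order-$k$ equivalence class $\gamma$), a hidden dimension $d_{\mathcal{T}}$, an input projection $w^{in}\in\mathbb{R}^{(d+kd_p+d_e)\times d_{\mathcal{T}}}$, a head dimension $d_H$, and query/key parameters $w^Q,w^K\in\mathbb{R}^{d_{\mathcal{T}}\times d_H}$, $b^Q,b^K\in\mathbb{R}^{d_H}$ such that for every $\mathbf{X}\in\mathbb{R}^{n^k\times d}$ the self-attention coefficients $\boldsymbol{\alpha}$ computed from $\mathbf{Z}=\mathbf{X}^{in}w^{in}$ satisfy $$\Big|\boldsymbol{\alpha}_{\mathbf{i},\mathbf{j}}-\frac{\mathbf{B}^\mu_{\mathbf{i},\mathbf{j}}}{\sum_{\mathbf{j}'\in[n]^k}\mathbf{B}^\mu_{\mathbf{i},\mathbf{j}'}}\Big|<\delta$$ for all $\mathbf{i},\mathbf{j}\in[n]^k$ such that $\sum_{\mathbf{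j}'}\mathbf{B}^\mu_{\mathbf{i},\mathbf{j}'}>0$.
   Context: For $l\ge1$, the equivalence relation $\sim$ on $[n]^l$ relates $\mathbf{i}\sim\mathbf{j}$ iff $(i_1,\dots,i_l)=(\pi(j_1),\dots,\pi(j_l))$ for some permutation $\pi\in S_n$; an order-$l$ equivalence class is an element of $[n]^l/_\sim$ (equivalently, the set of all multi-indices with a given equality pattern among their entries). The basis tensor of an order-$l$ class $\gamma$ is $\mathbf{B}^\gamma\in\mathbb{R}^{n^l}$ with $\mathbf{B}^\gamma_{\mathbf{i}}=1$ if $\mathbf{i}\in\gamma$ and $0$ otherwise; for an order-$2k$ class $\mu$ we write $\mathbf{B}^\mu_{\mathbf{i},\mathbf{j}}$ for the entry at the concatenated index $(\mathbf{i},\mathbf{j})$. Augmentation: given $\mathbf{X}\in\mathbb{R}^{n^k\times d}$ (rows $\mathbf{X}_{\mathbf{i}}$ indexed by $\mathbf{i}=(i_1,\dots,i_k)\in[n]^k$), node identifiers $\mathbf{P}$ and type identifiers $\mathbf{E}^\gamma$, the augmented tensor $\mathbf{X}^{in}\in\mathbb{R}^{n^k\times(d+kd_p+d_e)}$ has rows $\mathbf{X}^{in}_{\mathbf{i}}=[\mathbf{X}_{\mathbf{i}},\mathbf{P}_{i_1},\dots,\mathbf{P}_{i_k},\mathbf{E}^{\gamma}]$ where $\gamma$ is the order-$k$ class containing $\mathbf{i}$. A self-attention head on $\mathbf{Z}\in\mathbb{R}^{n^k\times d_{\mathcal{T}}}$ has coefficients $\boldsymbol{\alpha}=\mathrm{softmax}\big((\mathbf{Z}w^Q+\mathbf{1}(b^Q)^\top)(\mathbf{Z}w^K+\mathbf{1}(b^K)^\top)^\top/\sqrt{d_H}\big)$,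 with softmax taken over each row (over keys $\mathbf{j}\in[n]^k$). *)

theory Defs
  imports Complex_Main "HOL-Combinatorics.Permutations"
begin

definition idx :: "nat \<Rightarrow> nat \<Rightarrow> nat list set" where
  "idx n l = {xs. length xs = l \<and> set xs \<subseteq> {..<n}}"

definition idx_rel :: "nat \<Rightarrow> nat \<Rightarrow> (nat list \<times> nat list) set" where
  "idx_rel n l = {(i, j). i \<in> idx n l \<and> j \<in> idx n l \<and>
                          (\<exists>\<pi>. \<pi> permutes {..<n} \<and> i = map \<pi> j)}"

definition eq_classes :: "nat \<Rightarrow> nat \<Rightarrow> nat list set set" where
  "eq_classes n l = idx n l // idx_rel n l"

definition basis :: "nat list set \<Rightarrow> nat list \<Rightarrow> real" where
  "basis \<gamma> i = (if i \<in> \<gamma> then 1 else 0)"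

definition class_of :: "nat \<Rightarrow> nat \<Rightarrow> nat list \<Rightarrow> nat list set" where
  "class_of n k i = idx_rel n k `` {i}"

text \<open>Augmented input: row i is [X_i, P_{i_1}, ..., P_{i_k}, E^gamma], of width d + k*dp + de.
  Feature vectors are functions nat => real, meaningful on indices below the width.\<close>
definition augment ::
  "nat \<Rightarrow> nat \<Rightarrow> nat \<Rightarrow> nat \<Rightarrow> (nat list \<Rightarrow> nat \<Rightarrow> real) \<Rightarrow> (nat \<Rightarrow> nat \<Rightarrow> real)
    \<Rightarrow> (nat list set \<Rightarrow> nat \<Rightarrow> real) \<Rightarrow> nat list \<Rightarrow> nat \<Rightarrow> real" where
  "augment n k d dp X P E i f =
     (if f < d then X i f
      else if f < d + k * dp then P (i ! ((f - d) div dp)) ((f - d) mod dp)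
      else E (class_of n k i) (f - d - k * dp))"

definition attn_coeff ::
  "nat \<Rightarrow> nat \<Rightarrow> nat \<Rightarrow> nat \<Rightarrow> (nat list \<Rightarrow> nat \<Rightarrow> real)
    \<Rightarrow> (nat \<Rightarrow> nat \<Rightarrow> real) \<Rightarrow> (nat \<Rightarrow> nat \<Rightarrow> real) \<Rightarrow> (nat \<Rightarrow> real) \<Rightarrow> (nat \<Rightarrow> real)
    \<Rightarrow> nat list \<Rightarrow> nat list \<Rightarrow> real" where
  "attn_coeff n k dT dH Z wQ wK bQ bK i j =
     (let Q = (\<lambda>r h. (\<Sum>t<dT. Z r t * wQ t h) + bQ h);
          K = (\<lambda>r h. (\<Sum>t<dT. Z r t * wK t h) + bK h);
          S = (\<lambda>r s. (\<Sum>h<dH. Q r h * K s h) / sqrt (real dH))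
      in exp (S i j) / (\<Sum>j'\<in>idx n k. exp (S i j')))"

definition proj :: "nat \<Rightarrow> (nat list \<Rightarrow> nat \<Rightarrow> real) \<Rightarrow> (nat \<Rightarrow> nat \<Rightarrow> real) \<Rightarrow> nat list \<Rightarrow> nat \<Rightarrow> real" where
  "proj D Xin win i t = (\<Sum>f<D. Xin i f * win f t)"

end

theory Submission
  imports Defs
begin

(* Fix a representative m of mu. A pair (i, j) has i @ j in mu iff i @ j has the equality
   pattern of m, and the integer score sum_{a,b} sign(m_a = m_b) [x_a = x_b] is maximal exactly
   on that pattern and at least 1 smaller elsewhere; so the softmax over j of lam times the score
   of i @ j tends to the normalised indicator of mu as lam grows. The score of i @ j splits into
   a term depending on i only (invisible to a softmax over j), a term depending only on the
   pattern of j (stored in the type identifier), and a cross term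
   sum_{a,b} 2 sign(m_a = m_{k+b}) <P_{i_a}, P_{j_b}>, bilinear thanks to orthonormality.
   A bilinear form of the augmented input is an attention score: use the identity as key
   projection and the matrix of the form as query projection. *)

lemma sum_lessThan_add_nat: "(\<Sum>x<m + l. f x) = (\<Sum>x<m. f x) + (\<Sum>x<l. f (m + x::nat))"
  by (induction l) (simp_all add: add_ac)

lemma sum_lessThan_mult_nat: "(\<Sum>x<m * p. f x) = (\<Sum>a<m. \<Sum>c<p. f (a * p + c::nat))"
proof -
  have "(\<Sum>x<m * p. f x) = (\<Sum>a<m. sum f {a * p..<a * p + p})"
    using sum.nat_group[of f p m] by simp
  also have "\<dots> = (\<Sum>a<m. \<Sum>c<p. f (a * p + c))"
  proof (rule sum.cong[OF refl])
    fix a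
    have "sum f {0 + a * p..<p + a * p} = (\<Sum>c = 0..<p. f (c + a * p))"
      by (rule sum.shift_bounds_nat_ivl)
    then show "sum f {a * p..<a * p + p} = (\<Sum>c<p. f (a * p + c))"
      by (simp add: add.commute atLeast0LessThan)
  qed
  finally show ?thesis .
qed

lemma permutes_extending_bij_betw:
  assumes "finite S" "A \<subseteq> S" "B \<subseteq> S" "bij_betw f A B"
  obtains \<pi> where "\<pi> permutes S" "\<And>x. x \<in> A \<Longrightarrow> \<pi> x = f x"
proof -
  have "card (S - A) = card (S - B)"
    using assms by (simp add: card_Diff_subset bij_betw_same_card finite_subset)
  then obtain g where g: "bij_betw g (S - A) (S - B)"
    using assms(1) finite_same_card_bij by blast
  define \<pi> where "\<pi> x = (if x \<in> A then f x else if x \<in> S then g x else x)" for x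
  have "bij_betw \<pi> A B"
    using assms(4) by (rule bij_betw_cong[THEN iffD1, rotated]) (simp add: \<pi>_def)
  moreover have "bij_betw \<pi> (S - A) (S - B)"
    using g by (rule bij_betw_cong[THEN iffD1, rotated]) (simp add: \<pi>_def)
  ultimately have "bij_betw \<pi> (A \<union> (S - A)) (B \<union> (S - B))"
    by (rule bij_betw_combine) blast
  then have "bij_betw \<pi> S S"
    using assms(2,3) by (simp add: Un_absorb1)
  then have "\<pi> permutes S"
    by (rule bij_imp_permutes) (use assms(2) in \<open>auto simp: \<pi>_def\<close>)
  then show ?thesis using that by (simp add: \<pi>_def)
qed

definition same_pattern :: "nat \<Rightarrow> nat list \<Rightarrow> nat list \<Rightarrow> bool" where
  "same_pattern L x y \<longleftrightarrow> (\<forall>a<L. \<forall>b<L. x ! a = x ! b \<longleftrightarrow> y ! a = y ! b)"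

lemma same_pattern_sym: "same_pattern L x y \<Longrightarrow> same_pattern L y x"
  unfolding same_pattern_def by blast

lemma same_pattern_map_inj_on:
  assumes "inj_on \<pi> (set x)" "L \<le> length x"
  shows "same_pattern L (map \<pi> x) x"
  using assms unfolding same_pattern_def by (auto dest: inj_onD)

lemma same_pattern_imp_map_permutes:
  assumes x: "x \<in> idx n L" and y: "y \<in> idx n L" and pat: "same_pattern L x y"
  obtains \<pi> where "\<pi> permutes {..<n}" "y = map \<pi> x"
proof -
  have len: "length x = L" "length y = L" and sets: "set x \<subseteq> {..<n}" "set y \<subseteq> {..<n}"
    using x y by (auto simp: idx_def)
  define f where "f z = y ! (LEAST a. x ! a = z)" for z
  have f_nth: "f (x ! a) = y ! a" if "a < L" for a
  proof -
    have "(LEAST a'. x ! a' = x ! a) \<le> a" by (rule Least_le) simp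
    moreover have "x ! (LEAST a'. x ! a' = x ! a) = x ! a" by (rule LeastI) simp
    ultimately show ?thesis using pat that unfolding f_def same_pattern_def by simp
  qed
  have "bij_betw f (set x) (set y)"
  proof (rule bij_betwI')
    fix z z' assume "z \<in> set x" "z' \<in> set x"
    then show "f z = f z' \<longleftrightarrow> z = z'"
      using pat len by (auto simp: in_set_conv_nth f_nth same_pattern_def)
  next
    fix z assume "z \<in> set x"
    then show "f z \<in> set y" using len by (auto simp: in_set_conv_nth f_nth)
  next
    fix z assume "z \<in> set y"
    then show "\<exists>z'\<in>set x. z = f z'" using len by (metis in_set_conv_nth f_nth nth_mem)
  qed
  then obtain \<pi> where "\<pi> permutes {..<n}" "\<And>z. z \<in> set x \<Longrightarrow> \<pi> z = f z"
    using permutes_extending_bij_betw[of "{..<n}"] sets by blast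
  moreover from this(2) have "y = map \<pi> x"
    by (intro nth_equalityI) (simp_all add: len f_nth)
  ultimately show ?thesis using that by blast
qed

lemma idx_rel_iff_same_pattern:
  assumes "x \<in> idx n L" "y \<in> idx n L"
  shows "(x, y) \<in> idx_rel n L \<longleftrightarrow> same_pattern L x y"
proof
  assume "(x, y) \<in> idx_rel n L"
  then obtain \<pi> where "\<pi> permutes {..<n}" "x = map \<pi> y" by (auto simp: idx_rel_def)
  then show "same_pattern L x y"
    using same_pattern_map_inj_on[of \<pi> y L] assms(2)
    by (auto simp: idx_def permutes_inj_on)
next
  assume "same_pattern L x y"
  then show "(x, y) \<in> idx_rel n L"
    using same_pattern_imp_map_permutes[OF assms(2,1)] assms
    by (auto simp: idx_rel_def same_pattern_sym)
qed

definition pattern_score :: "nat list \<Rightarrow> nat \<Rightarrow> nat list \<Rightarrow> int" where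
  "pattern_score m L x = (\<Sum>a<L. \<Sum>b<L. (if m ! a = m ! b then 1 else -1) * of_bool (x ! a = x ! b))"

lemma pattern_score_cong:
  "same_pattern L x y \<Longrightarrow> pattern_score m L x = pattern_score m L y"
  unfolding pattern_score_def same_pattern_def by (intro sum.cong refl) auto

lemma pattern_score_less:
  assumes "\<not> same_pattern L m x"
  shows "pattern_score m L x < pattern_score m L m"
proof -
  obtain a0 b0 where ab: "a0 < L" "b0 < L" "(m ! a0 = m ! b0) \<noteq> (x ! a0 = x ! b0)"
    using assms unfolding same_pattern_def by blast
  let ?t = "\<lambda>y a b. (if m ! a = m ! b then 1 else -1) * of_bool (y ! a = y ! b) :: int"
  have le: "?t x a b \<le> ?t m a b" for a b by simp
  have "(\<Sum>b<L. ?t x a0 b) < (\<Sum>b<L. ?t m a0 b)"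
    using ab by (intro sum_strict_mono_ex1) (auto simp del: of_bool_eq intro!: bexI[of _ b0])
  then show ?thesis
    unfolding pattern_score_def using ab(1)
    by (intro sum_strict_mono_ex1) (blast intro: sum_mono le)+
qed

definition cross_pattern_score :: "nat list \<Rightarrow> nat \<Rightarrow> nat list \<Rightarrow> nat list \<Rightarrow> int" where
  "cross_pattern_score m k i j =
     (\<Sum>a<k. \<Sum>b<k. 2 * (if m ! a = m ! (k + b) then 1 else -1) * of_bool (i ! a = j ! b))"

lemma pattern_score_append:
  assumes "length i = k" "length j = k" "k \<le> length m"
  shows "pattern_score m (2 * k) (i @ j) =
           pattern_score (take k m) k i + cross_pattern_score m k i j + pattern_score (drop k m) k j"
proof -
  let ?t = "\<lambda>a b. (if m ! a = m ! b then 1 else -1) * of_bool ((i @ j) ! a = (i @ j) ! b) :: int"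
  have "pattern_score m (2 * k) (i @ j) =
      (\<Sum>a<k. \<Sum>b<k. ?t a b) + (\<Sum>a<k. \<Sum>b<k. ?t a (k + b)) +
      ((\<Sum>a<k. \<Sum>b<k. ?t (k + a) b) + (\<Sum>a<k. \<Sum>b<k. ?t (k + a) (k + b)))"
    unfolding pattern_score_def mult_2 sum_lessThan_add_nat by (simp add: sum.distrib)
  moreover have "(\<Sum>a<k. \<Sum>b<k. ?t (k + a) b) = (\<Sum>a<k. \<Sum>b<k. ?t a (k + b))"
    by (subst sum.swap) (simp add: eq_commute)
  moreover have "(\<Sum>a<k. \<Sum>b<k. ?t a b) = pattern_score (take k m) k i"
    unfolding pattern_score_def using assms by (intro sum.cong refl) (simp add: nth_append)
  moreover have "(\<Sum>a<k. \<Sum>b<k. ?t (k + a) (k + b)) = pattern_score (drop k m) k j"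
    unfolding pattern_score_def using assms by (intro sum.cong refl) (simp add: nth_append)
  moreover have "2 * (\<Sum>a<k. \<Sum>b<k. ?t a (k + b)) = cross_pattern_score m k i j"
    unfolding cross_pattern_score_def sum_distrib_left using assms
    by (intro sum.cong refl) (simp add: nth_append)
  ultimately show ?thesis by linarith
qed

definition softmax :: "'a set \<Rightarrow> ('a \<Rightarrow> real) \<Rightarrow> 'a \<Rightarrow> real" where
  "softmax I s j = exp (s j) / (\<Sum>j'\<in>I. exp (s j'))"

lemma softmax_concentrates:
  assumes fin: "finite I" and "G \<subseteq> I" "G \<noteq> {}"
    and small: "real (card I) * exp (- lam) < \<delta>"
    and top: "\<And>j. j \<in> G \<Longrightarrow> s j = c"
    and gap: "\<And>j. j \<in> I - G \<Longrightarrow> s j \<le> c - lam"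
    and "j \<in> I"
  shows "\<bar>softmax I s j - of_bool (j \<in> G) / real (card G)\<bar> < \<delta>"
proof -
  define e where "e j = exp (s j - c)" for j
  define N where "N = real (card G)"
  define R where "R = (\<Sum>j'\<in>I - G. e j')"
  have N1: "N \<ge> 1"
    using assms(2,3) fin by (simp add: N_def Suc_le_eq card_gt_0_iff finite_subset)
  have e_bad: "e j' \<le> exp (- lam)" if "j' \<in> I - G" for j'
    using gap[OF that] by (simp add: e_def)
  have "R \<ge> 0" by (simp add: R_def e_def sum_nonneg)
  have "R \<le> real (card (I - G)) * exp (- lam)"
    using sum_mono[of "I - G" e "\<lambda>_. exp (- lam)"] e_bad by (simp add: R_def)
  also have "\<dots> \<le> real (card I) * exp (- lam)"
    using fin by (simp add: card_mono)
  finally have "R < \<delta>" using small by linarith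
  have "(\<Sum>j'\<in>I. e j') = (\<Sum>j'\<in>G. e j') + R"
    unfolding R_def using fin assms(2) by (metis sum.subset_diff add.commute)
  also have "(\<Sum>j'\<in>G. e j') = N" by (simp add: N_def e_def top)
  finally have "(\<Sum>j'\<in>I. exp (s j')) = exp c * (N + R)"
    by (simp add: e_def exp_diff sum_divide_distrib[symmetric] divide_eq_eq)
  then have "softmax I s j = e j / (N + R)"
    by (simp add: softmax_def e_def exp_diff)
  moreover have "\<bar>e j / (N + R) - of_bool (j \<in> G) / N\<bar> < \<delta>"
  proof (cases "j \<in> G")
    case True
    then have "\<bar>e j / (N + R) - of_bool (j \<in> G) / N\<bar> = R / (N * (N + R))"
      using N1 \<open>R \<ge> 0\<close> by (simp add: e_def top field_simps)
    also have "\<dots> \<le> R"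
      using N1 \<open>R \<ge> 0\<close> mult_mono[of 1 N 1 "N + R"] by (simp add: divide_le_eq mult_le_cancel_left1)
    finally show ?thesis using \<open>R < \<delta>\<close> by linarith
  next
    case False
    then have "\<bar>e j / (N + R) - of_bool (j \<in> G) / N\<bar> \<le> e j"
      using N1 \<open>R \<ge> 0\<close> by (simp add: e_def divide_le_eq)
    also have "\<dots> \<le> exp (- lam)"
      using False e_bad \<open>j \<in> I\<close> by blast
    also have "\<dots> \<le> real (card I) * exp (- lam)"
      using \<open>j \<in> I\<close> fin by (auto simp: Suc_le_eq card_gt_0_iff)
    finally show ?thesis using small by linarith
  qed
  ultimately show ?thesis by (simp add: N_def)
qed

lemma finite_idx: "finite (idx n l)"
  using finite_lists_length_eq[of "{..<n}" l] by (simp add: idx_def conj_commute)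

lemma nth_idx_less: "x \<in> idx n l \<Longrightarrow> a < l \<Longrightarrow> x ! a < n"
  by (auto simp: idx_def dest: nth_mem)

lemma append_in_idx: "i \<in> idx n k \<Longrightarrow> j \<in> idx n l \<Longrightarrow> i @ j \<in> idx n (k + l)"
  by (auto simp: idx_def)

lemma softmax_pattern_score_approx:
  assumes m: "m \<in> idx n (2 * k)" and \<mu>: "\<mu> = idx_rel n (2 * k) `` {m}"
    and i: "i \<in> idx n k" and j: "j \<in> idx n k"
    and pos: "(\<Sum>j'\<in>idx n k. basis \<mu> (i @ j')) > 0"
    and "lam \<ge> 0" and small: "real (card (idx n k)) * exp (- lam) < \<delta>"
  shows "\<bar>softmax (idx n k) (\<lambda>j. lam * of_int (pattern_score m (2 * k) (i @ j) - c)) j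
           - basis \<mu> (i @ j) / (\<Sum>j'\<in>idx n k. basis \<mu> (i @ j'))\<bar> < \<delta>"
proof -
  define G where "G = {j' \<in> idx n k. i @ j' \<in> \<mu>}"
  have ij_idx: "i @ j' \<in> idx n (2 * k)" if "j' \<in> idx n k" for j'
    using append_in_idx[OF i that] by (simp add: mult_2)
  have G_iff: "j' \<in> G \<longleftrightarrow> same_pattern (2 * k) m (i @ j')" if "j' \<in> idx n k" for j'
    using idx_rel_iff_same_pattern[OF m ij_idx[OF that]] that by (simp add: G_def \<mu>)
  have "(\<Sum>j'\<in>idx n k. basis \<mu> (i @ j')) = real (card G)"
    by (simp add: basis_def G_def sum.If_cases finite_idx Int_def)
  moreover have "basis \<mu> (i @ j) = of_bool (j \<in> G)"
    using j by (simp add: basis_def G_def)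
  moreover have "\<bar>softmax (idx n k) (\<lambda>j. lam * of_int (pattern_score m (2 * k) (i @ j) - c)) j
                   - of_bool (j \<in> G) / real (card G)\<bar> < \<delta>"
  proof (rule softmax_concentrates[OF finite_idx _ _ small _ _ j])
    show "G \<subseteq> idx n k" by (auto simp: G_def)
    show "G \<noteq> {}" using pos calculation(1) by auto
    show "lam * of_int (pattern_score m (2 * k) (i @ j') - c)
            = lam * of_int (pattern_score m (2 * k) m - c)" if "j' \<in> G" for j'
      using that G_iff pattern_score_cong[of "2 * k" m "i @ j'" m]
      by (auto simp: G_def same_pattern_sym)
    show "lam * of_int (pattern_score m (2 * k) (i @ j') - c)
            \<le> lam * of_int (pattern_score m (2 * k) m - c) - lam" if "j' \<in> idx n k - G" for j'
    proof -
      have "pattern_score m (2 * k) (i @ j') < pattern_score m (2 * k) m"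
        using that G_iff pattern_score_less by fastforce
      then have "of_int (pattern_score m (2 * k) (i @ j') - c)
                   \<le> of_int (pattern_score m (2 * k) m - c) - (1::real)"
        by linarith
      from mult_left_mono[OF this \<open>lam \<ge> 0\<close>] show ?thesis
        by (simp add: algebra_simps)
    qed
  qed
  ultimately show ?thesis by simp
qed

lemma mult_add_less_mult_nat: "a < k \<Longrightarrow> c < dp \<Longrightarrow> a * dp + c < k * (dp::nat)"
  by (metis add_less_cancel_left less_le_trans mult_Suc mult_le_mono1 Suc_leI add.commute)

lemma sum_augment:
  "(\<Sum>f<d + k * dp + de. augment n k d dp X P E i f * g f) =
     (\<Sum>f<d. X i f * g f) + (\<Sum>a<k. \<Sum>c<dp. P (i ! a) c * g (d + a * dp + c)) +
     (\<Sum>e<de. E (class_of n k i) e * g (d + k * dp + e))"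
proof -
  have "augment n k d dp X P E i (d + (a * dp + c)) = P (i ! a) c" if "a < k" "c < dp" for a c
    using mult_add_less_mult_nat[OF that] that by (simp add: augment_def)
  then have "(\<Sum>a<k. \<Sum>c<dp. augment n k d dp X P E i (d + (a * dp + c)) * g (d + (a * dp + c)))
      = (\<Sum>a<k. \<Sum>c<dp. P (i ! a) c * g (d + a * dp + c))"
    by (simp add: add.assoc)
  then show ?thesis
    unfolding sum_lessThan_add_nat sum_lessThan_mult_nat by (simp add: augment_def)
qed

definition type_identifier :: "nat list \<Rightarrow> nat \<Rightarrow> nat list set \<Rightarrow> nat \<Rightarrow> real" where
  "type_identifier m k \<gamma> e =
     (if e = 0 then 1 else of_int (pattern_score (drop k m) k (SOME y. y \<in> \<gamma>)))"

lemma type_identifier_class_of: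
  assumes "r \<in> idx n k"
  shows "type_identifier m k (class_of n k r) 1 = of_int (pattern_score (drop k m) k r)"
proof -
  have "r \<in> class_of n k r"
    using assms permutes_id[of "{..<n}"] by (auto simp: class_of_def idx_rel_def intro!: exI[of _ id])
  then have "(r, SOME y. y \<in> class_of n k r) \<in> idx_rel n k"
    unfolding class_of_def using someI[where P = "\<lambda>y. y \<in> idx_rel n k `` {r}"] by blast
  moreover from this have "(SOME y. y \<in> class_of n k r) \<in> idx n k"
    by (simp add: idx_rel_def)
  ultimately have "same_pattern k r (SOME y. y \<in> class_of n k r)"
    using idx_rel_iff_same_pattern[OF assms] by blast
  then show ?thesis
    by (simp add: type_identifier_def pattern_score_cong)
qed

(* Index d + a * dp + c addresses coordinate c of the identifier of the a-th node; the entry at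
   (d + k * dp, d + k * dp + 1) pairs the constant type coordinate of the query with the
   pattern coordinate of the key. *)
definition pattern_query :: "nat list \<Rightarrow> nat \<Rightarrow> nat \<Rightarrow> nat \<Rightarrow> nat \<Rightarrow> nat \<Rightarrow> real" where
  "pattern_query m k d dp s t =
     (if d \<le> s \<and> s < d + k * dp \<and> d \<le> t \<and> t < d + k * dp
      then of_bool ((s - d) mod dp = (t - d) mod dp) *
           (2 * (if m ! ((s - d) div dp) = m ! (k + (t - d) div dp) then 1 else -1))
      else of_bool (s = d + k * dp \<and> t = d + k * dp + 1))"

lemma pattern_query_rows:
  fixes X :: "nat list \<Rightarrow> nat \<Rightarrow> real" and P :: "nat \<Rightarrow> nat \<Rightarrow> real" and m :: "nat list"
    and d dp :: nat
  assumes j: "j \<in> idx n k"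
  defines "row \<equiv> \<lambda>s. \<Sum>t<d + k * dp + 2.
             augment n k d dp X P (type_identifier m k) j t * pattern_query m k d dp s t"
  shows "f < d \<Longrightarrow> row f = 0"
    and "a < k \<Longrightarrow> c < dp \<Longrightarrow>
           row (d + a * dp + c) = (\<Sum>b<k. 2 * (if m ! a = m ! (k + b) then 1 else -1) * P (j ! b) c)"
    and "row (d + k * dp + e) = of_bool (e = 0) * of_int (pattern_score (drop k m) k j)"
proof -
  show "row f = 0" if "f < d"
    using that by (simp add: row_def pattern_query_def)
next
  let ?w = "\<lambda>b. 2 * (if m ! a = m ! (k + b) then 1 else -1) :: real"
  assume "a < k" "c < dp"
  have entry: "pattern_query m k d dp (d + a * dp + c) (d + b * dp + c') = (if c = c' then ?w b else 0)"
    if "b < k" "c' < dp" for b c'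
    using mult_add_less_mult_nat[OF \<open>a < k\<close> \<open>c < dp\<close>] mult_add_less_mult_nat[OF that] that \<open>c < dp\<close>
    by (simp add: pattern_query_def)
  have "(\<Sum>c'<dp. P (j ! b) c' * pattern_query m k d dp (d + a * dp + c) (d + b * dp + c'))
      = ?w b * P (j ! b) c" if "b < k" for b
  proof -
    have "(\<Sum>c'<dp. P (j ! b) c' * pattern_query m k d dp (d + a * dp + c) (d + b * dp + c'))
        = (\<Sum>c'<dp. if c = c' then P (j ! b) c' * ?w b else 0)"
      by (intro sum.cong refl) (simp add: entry that)
    then show ?thesis using \<open>c < dp\<close> by simp
  qed
  then show "row (d + a * dp + c) = (\<Sum>b<k. ?w b * P (j ! b) c)"
    unfolding row_def sum_augment
    using mult_add_less_mult_nat[OF \<open>a < k\<close> \<open>c < dp\<close>] by (simp add: pattern_query_def)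
next
  have "pattern_query m k d dp (d + k * dp + e) (d + b * dp + c) = 0" if "b < k" "c < dp" for b c
    using mult_add_less_mult_nat[OF that] by (simp add: pattern_query_def)
  then show "row (d + k * dp + e) = of_bool (e = 0) * of_int (pattern_score (drop k m) k j)"
    unfolding row_def sum_augment
    using type_identifier_class_of[OF j] by simp (simp add: pattern_query_def)
qed

lemma augment_pattern_query_bilinear:
  fixes X :: "nat list \<Rightarrow> nat \<Rightarrow> real" and m :: "nat list" and d :: nat
  assumes orth: "\<forall>a<n. \<forall>b<n. (\<Sum>c<dp. P a c * P b c) = (if a = b then 1 else 0)"
    and i: "i \<in> idx n k" and j: "j \<in> idx n k"
  defines "\<phi> \<equiv> augment n k d dp X P (type_identifier m k)"
  shows "(\<Sum>s<d + k * dp + 2. \<Sum>t<d + k * dp + 2. \<phi> i s * pattern_query m k d dp s t * \<phi> j t)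
           = of_int (cross_pattern_score m k i j + pattern_score (drop k m) k j)"
proof -
  define w where "w a b = 2 * (if m ! a = m ! (k + b) then 1 else -1 :: real)" for a b
  define row where "row s = (\<Sum>t<d + k * dp + 2. \<phi> j t * pattern_query m k d dp s t)" for s
  have rows: "f < d \<Longrightarrow> row f = 0"
    "a < k \<Longrightarrow> c < dp \<Longrightarrow> row (d + a * dp + c) = (\<Sum>b<k. w a b * P (j ! b) c)"
    "row (d + k * dp + e) = of_bool (e = 0) * of_int (pattern_score (drop k m) k j)" for f a c e
    using pattern_query_rows[OF j] by (simp_all only: row_def \<phi>_def w_def)
  have "(\<Sum>s<d + k * dp + 2. \<Sum>t<d + k * dp + 2. \<phi> i s * pattern_query m k d dp s t * \<phi> j t)
      = (\<Sum>s<d + k * dp + 2. \<phi> i s * row s)"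
    unfolding row_def sum_distrib_left by (intro sum.cong refl) (simp add: mult_ac)
  also have "\<dots> = (\<Sum>a<k. \<Sum>c<dp. P (i ! a) c * (\<Sum>b<k. w a b * P (j ! b) c))
                   + of_int (pattern_score (drop k m) k j)"
    unfolding \<phi>_def sum_augment by (simp add: rows type_identifier_def numeral_2_eq_2)
  also have "(\<Sum>a<k. \<Sum>c<dp. P (i ! a) c * (\<Sum>b<k. w a b * P (j ! b) c))
      = (\<Sum>a<k. \<Sum>b<k. w a b * (\<Sum>c<dp. P (i ! a) c * P (j ! b) c))"
    by (simp add: sum_distrib_left sum_distrib_right mult_ac sum.swap[of _ "{..<dp}"])
  also have "\<dots> = of_int (cross_pattern_score m k i j)"
    unfolding cross_pattern_score_def of_int_sum
    by (intro sum.cong refl) (simp add: orth w_def nth_idx_less[OF i] nth_idx_less[OF j])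
  finally show ?thesis by simp
qed

lemma proj_identity: "t < D \<Longrightarrow> proj D Z (\<lambda>f t. of_bool (f = t)) i t = Z i t"
  by (simp add: proj_def)

lemma attn_coeff_identity_key:
  "attn_coeff n k D D Z wQ (\<lambda>s t. of_bool (s = t)) (\<lambda>_. 0) (\<lambda>_. 0) i j
     = softmax (idx n k) (\<lambda>j. (\<Sum>s<D. \<Sum>t<D. Z i s * wQ s t * Z j t) / sqrt (real D)) j"
proof -
  have key: "(\<Sum>t<D. Z r t * of_bool (t = h)) = Z r h" if "h < D" for r h
  proof -
    have "(\<Sum>t<D. Z r t * of_bool (t = h)) = (\<Sum>t<D. if t = h then Z r h else 0)"
      by (intro sum.cong) auto
    then show ?thesis using that by simp
  qed
  have "(\<Sum>h<D. (\<Sum>s<D. Z r s * wQ s h) * Z r' h) = (\<Sum>s<D. \<Sum>t<D. Z r s * wQ s t * Z r' t)" for r r'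
    unfolding sum_distrib_right by (rule sum.swap)
  with key show ?thesis
    unfolding attn_coeff_def Let_def softmax_def by simp
qed

lemma attn_coeff_pattern_head:
  fixes X :: "nat list \<Rightarrow> nat \<Rightarrow> real" and d :: nat
  assumes orth: "\<forall>a<n. \<forall>b<n. (\<Sum>c<dp. P a c * P b c) = (if a = b then 1 else 0)"
    and m: "m \<in> idx n (2 * k)" and i: "i \<in> idx n k" and j: "j \<in> idx n k"
  defines "D \<equiv> d + k * dp + 2"
  shows "attn_coeff n k D D (proj D (augment n k d dp X P (type_identifier m k)) (\<lambda>f t. of_bool (f = t)))
           (\<lambda>s t. sqrt (real D) * lam * pattern_query m k d dp s t) (\<lambda>s t. of_bool (s = t))
           (\<lambda>_. 0) (\<lambda>_. 0) i j
         = softmax (idx n k)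
             (\<lambda>j. lam * of_int (pattern_score m (2 * k) (i @ j) - pattern_score (take k m) k i)) j"
proof -
  let ?\<phi> = "augment n k d dp X P (type_identifier m k)"
  let ?Z = "proj D ?\<phi> (\<lambda>f t. of_bool (f = t))"
  have score:
    "(\<Sum>s<D. \<Sum>t<D. ?Z i s * (sqrt (real D) * lam * pattern_query m k d dp s t) * ?Z j' t)
       / sqrt (real D)
      = lam * of_int (pattern_score m (2 * k) (i @ j') - pattern_score (take k m) k i)"
    if "j' \<in> idx n k" for j'
  proof -
    have "(\<Sum>s<D. \<Sum>t<D. ?Z i s * (sqrt (real D) * lam * pattern_query m k d dp s t) * ?Z j' t)
        = sqrt (real D) * lam * (\<Sum>s<D. \<Sum>t<D. ?\<phi> i s * pattern_query m k d dp s t * ?\<phi> j' t)"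
      unfolding sum_distrib_left by (intro sum.cong refl) (simp only: proj_identity lessThan_iff mult_ac)
    also have "\<dots> = sqrt (real D) * lam *
                       of_int (cross_pattern_score m k i j' + pattern_score (drop k m) k j')"
      unfolding D_def by (simp only: augment_pattern_query_bilinear[OF orth i that])
    also have "\<dots> = sqrt (real D) * lam *
                       of_int (pattern_score m (2 * k) (i @ j') - pattern_score (take k m) k i)"
      using i that m by (simp add: pattern_score_append idx_def)
    moreover have "D > 0" by (simp add: D_def)
    ultimately show ?thesis by simp
  qed
  show ?thesis
    unfolding attn_coeff_identity_key softmax_def using j by (simp add: score cong: sum.cong)
qed

lemma exp_neg_scale_small:
  fixes C \<delta> :: real
  assumes "C \<ge> 0" "\<delta> > 0"
  obtains lam where "lam \<ge> 0" "C * exp (- lam) < \<delta>"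
proof
  let ?lam = "C / \<delta>"
  show "?lam \<ge> 0" using assms by simp
  have "?lam < exp ?lam" using exp_ge_add_one_self[of ?lam] by linarith
  then show "C * exp (- ?lam) < \<delta>" using assms(2) by (simp add: exp_minus field_simps)
qed

theorem lemma1:
  fixes n k d dp :: nat and P :: "nat \<Rightarrow> nat \<Rightarrow> real" and \<mu> :: "nat list set"
  assumes "n > 0" "k > 0" "d > 0" "dp > 0" "dp \<ge> n"
    and "\<forall>a<n. \<forall>b<n. (\<Sum>c<dp. P a c * P b c) = (if a = b then 1 else 0)"
    and "\<mu> \<in> eq_classes n (2 * k)"
  shows "\<forall>\<delta>>0. \<exists>(de::nat) (E::nat list set \<Rightarrow> nat \<Rightarrow> real) (dT::nat) (win::nat \<Rightarrow> nat \<Rightarrow> real)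
            (dH::nat) (wQ::nat \<Rightarrow> nat \<Rightarrow> real) (wK::nat \<Rightarrow> nat \<Rightarrow> real) (bQ::nat \<Rightarrow> real) (bK::nat \<Rightarrow> real).
           de > 0 \<and> dT > 0 \<and> dH > 0 \<and>
           (\<forall>X::nat list \<Rightarrow> nat \<Rightarrow> real. \<forall>i\<in>idx n k. \<forall>j\<in>idx n k.
              (\<Sum>j'\<in>idx n k. basis \<mu> (i @ j')) > 0 \<longrightarrow>
              \<bar>attn_coeff n k dT dH (proj (d + k * dp + de) (augment n k d dp X P E) win) wQ wK bQ bK i j
               - basis \<mu> (i @ j) / (\<Sum>j'\<in>idx n k. basis \<mu> (i @ j'))\<bar> < \<delta>)"
proof (intro allI impI)
  fix \<delta> :: real assume "\<delta> > 0"
  obtain m where m: "m \<in> idx n (2 * k)" and \<mu>: "\<mu> = idx_rel n (2 * k) `` {m}"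
    using assms(7) by (auto simp: eq_classes_def quotient_def)
  obtain lam where "lam \<ge> 0" and small: "real (card (idx n k)) * exp (- lam) < \<delta>"
    using exp_neg_scale_small[OF of_nat_0_le_iff \<open>\<delta> > 0\<close>] by blast
  let ?D = "d + k * dp + 2"
  have "\<bar>attn_coeff n k ?D ?D (proj ?D (augment n k d dp X P (type_identifier m k)) (\<lambda>f t. of_bool (f = t)))
           (\<lambda>s t. sqrt (real ?D) * lam * pattern_query m k d dp s t) (\<lambda>s t. of_bool (s = t))
           (\<lambda>_. 0) (\<lambda>_. 0) i j
         - basis \<mu> (i @ j) / (\<Sum>j'\<in>idx n k. basis \<mu> (i @ j'))\<bar> < \<delta>"
    if "i \<in> idx n k" "j \<in> idx n k" "(\<Sum>j'\<in>idx n k. basis \<mu> (i @ j')) > 0" for X i j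
    unfolding attn_coeff_pattern_head[OF assms(6) m that(1,2)]
    by (rule softmax_pattern_score_approx[OF m \<mu> that \<open>lam \<ge> 0\<close> small])
  then show "\<exists>de E dT win dH wQ wK bQ bK. de > 0 \<and> dT > 0 \<and> dH > 0 \<and>
           (\<forall>X. \<forall>i\<in>idx n k. \<forall>j\<in>idx n k.
              (\<Sum>j'\<in>idx n k. basis \<mu> (i @ j')) > 0 \<longrightarrow>
              \<bar>attn_coeff n k dT dH (proj (d + k * dp + de) (augment n k d dp X P E) win) wQ wK bQ bK i j
               - basis \<mu> (i @ j) / (\<Sum>j'\<in>idx n k. basis \<mu> (i @ j'))\<bar> < \<delta>)"
    by (intro exI[of _ 2] exI conjI) auto
qed

end
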